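(* Consider (CVOP) and its associated convex projection (Pv) with feasible set $S_a$ and $Y_a=\operatorname{proj}_y[S_a]$. (1) If $\bar S\subseteq S_a$ is a solution of (Pv), then $\bar X:=\operatorname{proj}_x[\bar S]$ is an infimizer of (CVOP). (2) If (Pv) is self-bounded, then (CVOP) is self-bounded. If, additionally, $(\operatorname{cl}Y_a)_\infty=\operatorname{cl}C$, then (CVOP) is bounded. (3) Let (Pv) be self-bounded and let $\bar S\subseteq S_a$ be a finite $\epsilon$-solution of (Pv). Then $\bar X:=\operatorname{proj}_x[\bar S]$ is a finite $\tilde\epsilon$-infimizer of (CVOP) for every $\tilde\epsilon>\epsilon/\delta_c$, where $\delta_c:=\sup\{\delta>0: c+B_\delta\subseteq C\}$.
   Context: (CVOP): $\min\Gamma(x)$ w.r.t. $\le_C$ s.t. $x\in\mathcal{X}$, with $C\subseteq\mathbb{R}^m$ a non-trivial pointed solid convex cone, $\mathcal{X}\subseteq\mathbb{R}^n$ convex, $\Gamma$ $C$-convex; upper image $\mathcal{G}=\operatorname{cl}(\Gamma[\mathcal{X}]+C)$. $S_a=\{(x,y):x\in\mathcal{X},y\in\Gamma(x)+C\}$, $\operatorname{proj}_x(x,y)=x$, $\operatorname{proj}_y(x,y)=y$. Recession cone $A_\infty=\{y:x+\lambda y\in A\ \forall x\in A,\lambda\ge0\}$. Fix a $p$-norm with closed balls $B_\epsilon$, a direction $c\in\operatorname{int}C$ with $\|c\|=1$ and $\epsilon>0$. (CVOP) is bounded if $\mathcal{G}\subseteq\{q\}+C$ for some $q$; self-bounded if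 $\mathcal{G}\ne\mathbb{R}^m$ and $\mathcal{G}\subseteq\{q\}+\mathcal{G}_\infty$ for some $q$. $\bar X\subseteq\mathcal{X}$ is an infimizer if $\mathcal{G}=\operatorname{cl}\operatorname{conv}(\Gamma[\bar X]+C)$. A nonempty finite $\bar X$ is a finite $\epsilon$-infimizer if $\mathcal{G}\subseteq\operatorname{conv}\Gamma[\bar X]+C-\epsilon\{c\}$ (bounded case), resp. $\mathcal{G}\subseteq\operatorname{conv}\Gamma[\bar X]+\mathcal{G}_\infty-\epsilon\{c\}$ (self-bounded case). For (Pv): $\bar S\subseteq S_a$ is a solution if $Y_a\subseteq\operatorname{cl}\operatorname{conv}\operatorname{proj}_y[\bar S]$; (Pv) is self-bounded if $Y_a\ne\mathbb{R}^m$ and $Y_a\subseteq\operatorname{conv}\{y^{(1)},\dots,y^{(k)}\}+(\operatorname{cl}Y_a)_\infty$ for finitely many points; a nonempty finite $\bar S\subseteq S_a$ is a finite $\epsilon$-solution of self-bounded (Pv) if $Y_a\subseteq\operatorname{conv}\operatorname{proj}_y[\bar S]+(\operatorname{cl}Y_a)_\infty+B_\epsilon$. *)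

theory Defs
  imports "HOL-Analysis.Analysis" "HOL-Library.Extended_Real"
begin

definition msum :: "'a::plus set \<Rightarrow> 'a set \<Rightarrow> 'a set" where
  "msum A B = {a + b | a b. a \<in> A \<and> b \<in> B}"

definition rec_cone :: "'a::real_vector set \<Rightarrow> 'a set" where
  "rec_cone A = {y. \<forall>x\<in>A. \<forall>l::real. l \<ge> 0 \<longrightarrow> x + l *\<^sub>R y \<in> A}"

definition pnorm :: "ereal \<Rightarrow> real^'m \<Rightarrow> real" where
  "pnorm p y = (if p = \<infinity> then Max (range (\<lambda>i. \<bar>y $ i\<bar>))
                else (\<Sum>i\<in>UNIV. \<bar>y $ i\<bar> powr real_of_ereal p) powr (1 / real_of_ereal p))"

definition pball :: "ereal \<Rightarrow> real \<Rightarrow> (real^'m) set" where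
  "pball p e = {y. pnorm p y \<le> e}"

definition pointed :: "'a::real_vector set \<Rightarrow> bool" where
  "pointed C \<longleftrightarrow> C \<inter> uminus ` C \<subseteq> {0}"

definition C_convex :: "('b::real_vector) set \<Rightarrow> 'a::real_vector set \<Rightarrow> ('a \<Rightarrow> 'b) \<Rightarrow> bool" where
  "C_convex C X \<Gamma> \<longleftrightarrow> (\<forall>x\<in>X. \<forall>x'\<in>X. \<forall>t::real. 0 \<le> t \<and> t \<le> 1 \<longrightarrow>
      t *\<^sub>R \<Gamma> x + (1 - t) *\<^sub>R \<Gamma> x' - \<Gamma> (t *\<^sub>R x + (1 - t) *\<^sub>R x') \<in> C)"

definition Sa :: "'b::real_vector set \<Rightarrow> 'a set \<Rightarrow> ('a \<Rightarrow> 'b) \<Rightarrow> ('a \<times> 'b) set" where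
  "Sa C X \<Gamma> = {(x, y). x \<in> X \<and> y \<in> msum {\<Gamma> x} C}"

definition Ya :: "'b::real_vector set \<Rightarrow> 'a set \<Rightarrow> ('a \<Rightarrow> 'b) \<Rightarrow> 'b set" where
  "Ya C X \<Gamma> = snd ` Sa C X \<Gamma>"

definition upper_image :: "'b::real_normed_vector set \<Rightarrow> 'a set \<Rightarrow> ('a \<Rightarrow> 'b) \<Rightarrow> 'b set" where
  "upper_image C X \<Gamma> = closure (msum (\<Gamma> ` X) C)"

definition cvop_bounded :: "'b::real_normed_vector set \<Rightarrow> 'a set \<Rightarrow> ('a \<Rightarrow> 'b) \<Rightarrow> bool" where
  "cvop_bounded C X \<Gamma> \<longleftrightarrow> (\<exists>q. upper_image C X \<Gamma> \<subseteq> msum {q} C)"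

definition cvop_self_bounded :: "'b::real_normed_vector set \<Rightarrow> 'a set \<Rightarrow> ('a \<Rightarrow> 'b) \<Rightarrow> bool" where
  "cvop_self_bounded C X \<Gamma> \<longleftrightarrow> upper_image C X \<Gamma> \<noteq> UNIV \<and>
     (\<exists>q. upper_image C X \<Gamma> \<subseteq> msum {q} (rec_cone (upper_image C X \<Gamma>)))"

definition infimizer :: "'b::real_normed_vector set \<Rightarrow> 'a set \<Rightarrow> ('a \<Rightarrow> 'b) \<Rightarrow> 'a set \<Rightarrow> bool" where
  "infimizer C X \<Gamma> Xb \<longleftrightarrow> Xb \<subseteq> X \<and>
     upper_image C X \<Gamma> = closure (convex hull (msum (\<Gamma> ` Xb) C))"

text \<open>Finite eps-infimizer in the self-bounded case.\<close>
definition fin_eps_infimizer_sb ::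
  "'b::real_normed_vector set \<Rightarrow> 'a set \<Rightarrow> ('a \<Rightarrow> 'b) \<Rightarrow> 'b \<Rightarrow> real \<Rightarrow> 'a set \<Rightarrow> bool" where
  "fin_eps_infimizer_sb C X \<Gamma> c e Xb \<longleftrightarrow> Xb \<subseteq> X \<and> finite Xb \<and> Xb \<noteq> {} \<and>
     upper_image C X \<Gamma> \<subseteq>
       msum (msum (convex hull (\<Gamma> ` Xb)) (rec_cone (upper_image C X \<Gamma>))) {- (e *\<^sub>R c)}"

definition pv_solution :: "'b::real_normed_vector set \<Rightarrow> 'a set \<Rightarrow> ('a \<Rightarrow> 'b) \<Rightarrow> ('a \<times> 'b) set \<Rightarrow> bool" where
  "pv_solution C X \<Gamma> Sb \<longleftrightarrow> Sb \<subseteq> Sa C X \<Gamma> \<and>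
     Ya C X \<Gamma> \<subseteq> closure (convex hull (snd ` Sb))"

definition pv_self_bounded :: "'b::real_normed_vector set \<Rightarrow> 'a set \<Rightarrow> ('a \<Rightarrow> 'b) \<Rightarrow> bool" where
  "pv_self_bounded C X \<Gamma> \<longleftrightarrow> Ya C X \<Gamma> \<noteq> UNIV \<and>
     (\<exists>P. finite P \<and> P \<noteq> {} \<and>
        Ya C X \<Gamma> \<subseteq> msum (convex hull P) (rec_cone (closure (Ya C X \<Gamma>))))"

definition pv_fin_eps_solution ::
  "ereal \<Rightarrow> (real^'m) set \<Rightarrow> 'a set \<Rightarrow> ('a \<Rightarrow> real^'m) \<Rightarrow> real \<Rightarrow> ('a \<times> (real^'m)) set \<Rightarrow> bool" where
  "pv_fin_eps_solution p C X \<Gamma> e Sb \<longleftrightarrow> Sb \<noteq> {} \<and> finite Sb \<and> Sb \<subseteq> Sa C X \<Gamma> \<and>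
     Ya C X \<Gamma> \<subseteq> msum (msum (convex hull (snd ` Sb)) (rec_cone (closure (Ya C X \<Gamma>)))) (pball p e)"

definition delta_c :: "ereal \<Rightarrow> (real^'m) set \<Rightarrow> real^'m \<Rightarrow> real" where
  "delta_c p C c = Sup {d. d > 0 \<and> msum {c} (pball p d) \<subseteq> C}"

end

theory Submission
  imports Defs
begin

text \<open>
  With Y_a = \<Gamma>[X] + C, the upper image is simply the closure of Y_a, and every element of
  Y_a lies above the image of its x-component.  For the boundedness statements one absorbs the compact set conv P of a
  self-bounded representation into a translate of the solid cone C, and C itself into the
  recession cone of the upper image.  Finally, the error ball B_\<epsilon> of a finite
  \<epsilon>-solution lies in -\<epsilon>' c + C as soon as \<epsilon>' \<delta>_c > \<epsilon>,
  because c + B_\<delta> \<subseteq> C for every \<delta> < \<delta>_c.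
\<close>

lemma msum_eq_set_plus [simp]: "msum A B = A + B"
  by (auto simp: msum_def set_plus_def)

lemma Ya_eq: "Ya C X \<Gamma> = \<Gamma> ` X + C"
  by (force simp: Ya_def Sa_def set_plus_def image_iff)

lemma upper_image_eq_closure_Ya: "upper_image C X \<Gamma> = closure (Ya C X \<Gamma>)"
  by (simp add: upper_image_def Ya_eq)

lemma closed_upper_image: "closed (upper_image C X \<Gamma>)"
  by (simp add: upper_image_def)

lemma Sa_snd_subset: "S \<subseteq> Sa C X \<Gamma> \<Longrightarrow> snd ` S \<subseteq> \<Gamma> ` fst ` S + C"
  by (force simp: Sa_def set_plus_def)

lemma Sa_fst_subset: "S \<subseteq> Sa C X \<Gamma> \<Longrightarrow> fst ` S \<subseteq> X"
  by (auto simp: Sa_def)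

lemma closed_compact_plus_closed:
  fixes K R :: "'a::real_normed_vector set"
  assumes "compact K" "closed R"
  shows "closed (K + R)"
proof -
  have "K + R = (\<Union>x\<in>K. \<Union>y\<in>R. {x + y})" by (auto simp: set_plus_def)
  then show ?thesis using compact_closed_sums[OF assms] by simp
qed

lemma closed_plus_singleton:
  fixes A :: "'a::real_normed_vector set"
  assumes "closed A" shows "closed (A + {q})"
proof -
  have "A + {q} = (+) q ` A" by (auto simp: set_plus_def add.commute)
  then show ?thesis using closed_translation[OF assms] by simp
qed

lemma convex_cone_plus_subset:
  assumes "convex C" "cone C" shows "C + C \<subseteq> C"
  using assms convex_cone[of C] by (auto simp: set_plus_def)

lemma rec_cone_plus_subset: "rec_cone A + rec_cone A \<subseteq> rec_cone A"
  by (auto simp: rec_cone_def set_plus_def scaleR_add_right add.assoc[symmetric])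

lemma closed_rec_cone:
  fixes A :: "'a::real_normed_vector set"
  assumes "closed A" shows "closed (rec_cone A)"
proof -
  have "rec_cone A = (\<Inter>x\<in>A. \<Inter>l\<in>{l::real. l \<ge> 0}. (\<lambda>y. x + l *\<^sub>R y) -` A)"
    by (auto simp: rec_cone_def)
  moreover have "closed ((\<lambda>y. x + l *\<^sub>R y) -` A)" for x and l :: real
    by (rule continuous_closed_vimage[OF assms]) (auto intro!: continuous_intros)
  ultimately show ?thesis by (simp add: closed_INT)
qed

lemma cone_subset_rec_cone_closure_plus:
  fixes C :: "'a::real_normed_vector set"
  assumes C: "convex C" "cone C"
  shows "C \<subseteq> rec_cone (closure (A + C))"
proof
  fix w assume w: "w \<in> C"
  have shift: "(+) v ` (A + C) \<subseteq> A + C" if "v \<in> C" for v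
  proof
    fix z assume "z \<in> (+) v ` (A + C)"
    then obtain a b where "a \<in> A" "b \<in> C" "z = a + (b + v)"
      by (auto simp: set_plus_def ac_simps)
    moreover have "b + v \<in> C" using convex_cone_plus_subset[OF C] \<open>b \<in> C\<close> that by blast
    ultimately show "z \<in> A + C" by blast
  qed
  show "w \<in> rec_cone (closure (A + C))" unfolding rec_cone_def
  proof (intro CollectI ballI allI impI)
    fix x and l :: real assume x: "x \<in> closure (A + C)" and l: "0 \<le> l"
    have "l *\<^sub>R w \<in> C" using C(2) w l by (simp add: cone_def)
    then have "(+) (l *\<^sub>R w) ` closure (A + C) \<subseteq> closure (A + C)"
      unfolding closure_translation[symmetric] by (intro closure_mono shift)
    then show "x + l *\<^sub>R w \<in> closure (A + C)" using x by (auto simp: add.commute)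
  qed
qed

lemma convex_image_plus_cone:
  assumes C: "convex C" "cone C" and X: "convex X" and \<Gamma>: "C_convex C X \<Gamma>"
  shows "convex (\<Gamma> ` X + C)"
proof (rule convexI)
  fix y1 y2 and u v :: real
  assume y1: "y1 \<in> \<Gamma> ` X + C" and y2: "y2 \<in> \<Gamma> ` X + C"
    and uv: "0 \<le> u" "0 \<le> v" "u + v = 1"
  obtain x1 c1 where x1: "x1 \<in> X" "c1 \<in> C" "y1 = \<Gamma> x1 + c1" using y1 by (auto simp: set_plus_def)
  obtain x2 c2 where x2: "x2 \<in> X" "c2 \<in> C" "y2 = \<Gamma> x2 + c2" using y2 by (auto simp: set_plus_def)
  have "v = 1 - u" using uv by simp
  define x where "x = u *\<^sub>R x1 + v *\<^sub>R x2"
  have "x \<in> X" using X x1 x2 uv unfolding x_def by (auto intro: convexD)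
  moreover have "u *\<^sub>R \<Gamma> x1 + v *\<^sub>R \<Gamma> x2 - \<Gamma> x \<in> C"
    using \<Gamma> x1 x2 uv unfolding C_convex_def x_def \<open>v = 1 - u\<close> by auto
  moreover have "u *\<^sub>R c1 + v *\<^sub>R c2 \<in> C" using C(1) x1 x2 uv by (auto intro: convexD)
  ultimately have "\<Gamma> x + ((u *\<^sub>R \<Gamma> x1 + v *\<^sub>R \<Gamma> x2 - \<Gamma> x) + (u *\<^sub>R c1 + v *\<^sub>R c2))
      \<in> \<Gamma> ` X + C"
    using convex_cone_plus_subset[OF C] by (intro set_plus_intro) auto
  moreover have "u *\<^sub>R y1 + v *\<^sub>R y2
      = \<Gamma> x + ((u *\<^sub>R \<Gamma> x1 + v *\<^sub>R \<Gamma> x2 - \<Gamma> x) + (u *\<^sub>R c1 + v *\<^sub>R c2))"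
    using x1 x2 by (simp add: algebra_simps)
  ultimately show "u *\<^sub>R y1 + v *\<^sub>R y2 \<in> \<Gamma> ` X + C" by simp
qed

lemma infimizer_fst_of_pv_solution:
  fixes C :: "'b::real_normed_vector set"
  assumes C: "convex C" "cone C" and X: "convex X" and \<Gamma>: "C_convex C X \<Gamma>"
    and S: "pv_solution C X \<Gamma> S"
  shows "infimizer C X \<Gamma> (fst ` S)"
proof -
  have SSa: "S \<subseteq> Sa C X \<Gamma>" and Y: "\<Gamma> ` X + C \<subseteq> closure (convex hull (snd ` S))"
    using S by (auto simp: pv_solution_def Ya_eq)
  have "fst ` S \<subseteq> X" using Sa_fst_subset[OF SSa] .
  then have below: "convex hull (\<Gamma> ` fst ` S + C) \<subseteq> \<Gamma> ` X + C"
    by (intro hull_minimal convex_image_plus_cone C X \<Gamma> set_plus_mono2) auto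
  have "closure (\<Gamma> ` X + C) \<subseteq> closure (convex hull (snd ` S))"
    using closure_mono[OF Y] by simp
  also have "\<dots> \<subseteq> closure (convex hull (\<Gamma> ` fst ` S + C))"
    by (intro closure_mono hull_mono Sa_snd_subset[OF SSa])
  finally show ?thesis using closure_mono[OF below] \<open>fst ` S \<subseteq> X\<close>
    unfolding infimizer_def upper_image_def by auto
qed

lemma bounded_subset_translate_solid_cone:
  fixes C :: "'a::real_normed_vector set"
  assumes C: "cone C" and c: "c \<in> interior C" and K: "bounded K"
  shows "\<exists>q. K \<subseteq> {q} + C"
proof -
  obtain r where r: "r > 0" "ball c r \<subseteq> C" using c mem_interior by blast
  obtain M where M: "M > 0" "\<forall>k\<in>K. norm k \<le> M" using K bounded_pos by blast
  define t where "t = M / r + 1"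
  have t: "t > 0" "M / t < r"
    using M r by (auto simp: t_def divide_less_eq field_simps)
  have "K \<subseteq> {- (t *\<^sub>R c)} + C"
  proof
    fix k assume k: "k \<in> K"
    have "norm ((1/t) *\<^sub>R k) \<le> M / t" using M k t by (simp add: divide_right_mono)
    then have "c + (1/t) *\<^sub>R k \<in> C" using r t by (auto simp: dist_norm)
    then have "t *\<^sub>R (c + (1/t) *\<^sub>R k) \<in> C" using C t by (simp add: cone_def)
    then have "t *\<^sub>R c + k \<in> C" using t by (simp add: scaleR_add_right)
    then show "k \<in> {- (t *\<^sub>R c)} + C" using set_plus_intro[of "- (t *\<^sub>R c)"] by force
  qed
  then show ?thesis by blast
qed

lemma interior_plus_closure_convex_cone:
  fixes C :: "'a::euclidean_space set"
  assumes C: "convex C" "cone C" and c: "c \<in> interior C" and z: "z \<in> closure C"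
  shows "c + z \<in> C"
proof (cases "z = c")
  case True
  then show ?thesis using c interior_subset convex_cone_plus_subset[OF C] by blast
next
  case False
  then have "midpoint c z \<in> open_segment c z" by simp
  then have "midpoint c z \<in> C"
    using in_interior_closure_convex_segment[OF C(1) c z] interior_subset by blast
  then have "2 *\<^sub>R midpoint c z \<in> C" using C(2) by (simp add: cone_def)
  then show ?thesis by (simp add: midpoint_def)
qed

lemma closure_neq_UNIV_convex:
  fixes S :: "'a::euclidean_space set"
  assumes "convex S" "S \<noteq> UNIV"
  shows "closure S \<noteq> UNIV"
proof
  assume "closure S = UNIV"
  then have "rel_interior S = UNIV" using convex_rel_interior_closure[OF assms(1)] by simp
  then show False using rel_interior_subset assms(2) by blast
qed

lemma upper_image_subset_translate_rec_cone:
  fixes C :: "'b::euclidean_space set"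
  assumes C: "convex C" "cone C" and c: "c \<in> interior C" and S: "pv_self_bounded C X \<Gamma>"
  shows "\<exists>q. upper_image C X \<Gamma> \<subseteq> {q} + rec_cone (upper_image C X \<Gamma>)"
proof -
  let ?R = "rec_cone (upper_image C X \<Gamma>)"
  obtain P where P: "finite P" "Ya C X \<Gamma> \<subseteq> convex hull P + ?R"
    using S unfolding pv_self_bounded_def upper_image_eq_closure_Ya by auto
  have K: "compact (convex hull P)" using P(1) by (simp add: compact_convex_hull finite_imp_compact)
  obtain q where q: "convex hull P \<subseteq> {q} + C"
    using bounded_subset_translate_solid_cone[OF C(2) c compact_imp_bounded[OF K]] by blast
  have CR: "C \<subseteq> ?R"
    unfolding upper_image_def msum_eq_set_plus by (rule cone_subset_rec_cone_closure_plus[OF C])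
  have "closure (Ya C X \<Gamma>) \<subseteq> convex hull P + ?R"
    by (intro closure_minimal P(2) closed_compact_plus_closed K closed_rec_cone closed_upper_image)
  then have "upper_image C X \<Gamma> \<subseteq> convex hull P + ?R"
    by (simp only: upper_image_eq_closure_Ya)
  also have "\<dots> \<subseteq> ({q} + C) + ?R" using q by (rule set_plus_mono2) simp
  also have "\<dots> = {q} + (C + ?R)" by (rule add.assoc)
  also have "\<dots> \<subseteq> {q} + ?R"
    using CR rec_cone_plus_subset[of "upper_image C X \<Gamma>"] by (meson order.trans set_plus_mono2 subset_refl)
  finally show ?thesis by blast
qed

lemma cvop_self_bounded_of_pv_self_bounded:
  fixes C :: "'b::euclidean_space set"
  assumes C: "convex C" "cone C" and c: "c \<in> interior C" and X: "convex X"
    and \<Gamma>: "C_convex C X \<Gamma>" and S: "pv_self_bounded C X \<Gamma>"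
  shows "cvop_self_bounded C X \<Gamma>"
proof -
  have "closure (Ya C X \<Gamma>) \<noteq> UNIV"
    using S convex_image_plus_cone[OF C X \<Gamma>]
    by (intro closure_neq_UNIV_convex) (auto simp: pv_self_bounded_def Ya_eq)
  then show ?thesis
    using upper_image_subset_translate_rec_cone[OF C c S]
    unfolding cvop_self_bounded_def upper_image_eq_closure_Ya by simp
qed

lemma cvop_bounded_of_pv_self_bounded:
  fixes C :: "'b::euclidean_space set"
  assumes C: "convex C" "cone C" and c: "c \<in> interior C" and S: "pv_self_bounded C X \<Gamma>"
    and R: "rec_cone (closure (Ya C X \<Gamma>)) = closure C"
  shows "cvop_bounded C X \<Gamma>"
proof -
  obtain q where q: "upper_image C X \<Gamma> \<subseteq> {q} + closure C"
    using upper_image_subset_translate_rec_cone[OF C c S] R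
    by (auto simp: upper_image_eq_closure_Ya)
  have "{q} + closure C \<subseteq> {q - c} + C"
  proof
    fix z assume "z \<in> {q} + closure C"
    then obtain r where "r \<in> closure C" "z = (q - c) + (c + r)" by (auto simp: set_plus_def)
    with interior_plus_closure_convex_cone[OF C c] show "z \<in> {q - c} + C" by blast
  qed
  with q show ?thesis unfolding cvop_bounded_def msum_eq_set_plus by blast
qed

lemma pnorm_scaleR:
  assumes p: "1 \<le> p" and a: "a > 0"
  shows "pnorm p (a *\<^sub>R y) = a * pnorm p y"
proof (cases "p = \<infinity>")
  case True
  have "mono (\<lambda>t::real. a * t)" using a by (auto intro: monoI)
  moreover have "range (\<lambda>i. \<bar>(a *\<^sub>R y) $ i\<bar>) = (\<lambda>t. a * t) ` range (\<lambda>i. \<bar>y $ i\<bar>)"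
    using a by (auto simp: abs_mult image_image)
  ultimately show ?thesis using True mono_Max_commute[of "\<lambda>t. a * t" "range (\<lambda>i. \<bar>y $ i\<bar>)"]
    by (simp add: pnorm_def)
next
  case False
  define q where "q = real_of_ereal p"
  have q: "q \<ge> 1" using p False unfolding q_def by (cases p) auto
  have "(\<Sum>i\<in>UNIV. \<bar>(a *\<^sub>R y) $ i\<bar> powr q) = a powr q * (\<Sum>i\<in>UNIV. \<bar>y $ i\<bar> powr q)"
    using a by (simp add: abs_mult powr_mult sum_distrib_left)
  then have "(\<Sum>i\<in>UNIV. \<bar>(a *\<^sub>R y) $ i\<bar> powr q) powr (1/q)
      = (a powr q) powr (1/q) * (\<Sum>i\<in>UNIV. \<bar>y $ i\<bar> powr q) powr (1/q)"
    by (simp add: powr_mult sum_nonneg)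
  also have "(a powr q) powr (1/q) = a" using a q by (simp add: powr_powr)
  finally show ?thesis using False by (simp add: pnorm_def q_def)
qed

lemma abs_component_le_pnorm:
  assumes p: "1 \<le> p"
  shows "\<bar>y $ i\<bar> \<le> pnorm p y"
proof (cases "p = \<infinity>")
  case True
  then show ?thesis by (simp add: pnorm_def)
next
  case False
  define q where "q = real_of_ereal p"
  have q: "q \<ge> 1" using p False unfolding q_def by (cases p) auto
  have "\<bar>y $ i\<bar> = (\<bar>y $ i\<bar> powr q) powr (1/q)" using q by (simp add: powr_powr)
  also have "\<dots> \<le> (\<Sum>i\<in>UNIV. \<bar>y $ i\<bar> powr q) powr (1/q)"
    using q by (intro powr_mono2) (auto intro: member_le_sum)
  finally show ?thesis using False by (simp add: pnorm_def q_def)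
qed

lemma norm_le_card_mult_pnorm:
  assumes p: "1 \<le> p"
  shows "norm y \<le> real CARD('m) * pnorm p (y::real^'m)"
proof -
  have "norm y \<le> (\<Sum>i\<in>UNIV. \<bar>y $ i\<bar>)" by (rule norm_le_l1_cart)
  also have "\<dots> \<le> (\<Sum>i\<in>(UNIV::'m set). pnorm p y)" by (intro sum_mono abs_component_le_pnorm[OF p])
  finally show ?thesis by simp
qed

lemma translate_pball_subset_interior:
  fixes c :: "real^'m"
  assumes p: "1 \<le> p" and c: "c \<in> interior C"
  shows "\<exists>d>0. {c} + pball p d \<subseteq> C"
proof -
  obtain r where r: "r > 0" "ball c r \<subseteq> C" using c mem_interior by blast
  define d where "d = r / (2 * real CARD('m))"
  have "{c} + pball p d \<subseteq> C"
  proof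
    fix z assume "z \<in> {c} + pball p d"
    then obtain y where y: "pnorm p y \<le> d" "z = c + y" by (auto simp: set_plus_def pball_def)
    have "norm y \<le> real CARD('m) * d"
      by (intro order.trans[OF norm_le_card_mult_pnorm[OF p]] mult_left_mono y(1)) simp
    also have "\<dots> < r" using r unfolding d_def by simp
    finally show "z \<in> C" using r y by (auto simp: dist_norm)
  qed
  moreover have "d > 0" using r unfolding d_def by simp
  ultimately show ?thesis by blast
qed

lemma bdd_above_translate_pball_radii:
  fixes c :: "real^'m"
  assumes "C \<noteq> UNIV"
  shows "bdd_above {d. d > 0 \<and> {c} + pball p d \<subseteq> C}" (is "bdd_above ?D")
proof (rule ccontr)
  assume unbounded: "\<not> bdd_above ?D"
  have "z \<in> C" for z
  proof -
    obtain d where d: "d \<in> ?D" "pnorm p (z - c) < d"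
      using unbounded by (auto simp: bdd_above_def not_le)
    then have "c + (z - c) \<in> {c} + pball p d" by (intro set_plus_intro) (auto simp: pball_def)
    then show "z \<in> C" using d(1) by auto
  qed
  then show False using assms by auto
qed

lemma delta_c_pos:
  fixes c :: "real^'m"
  assumes p: "1 \<le> p" and c: "c \<in> interior C" and C: "C \<noteq> UNIV"
  shows "delta_c p C c > 0"
proof -
  obtain d where "d > 0" "{c} + pball p d \<subseteq> C" using translate_pball_subset_interior[OF p c] by blast
  then show ?thesis
    using cSup_upper[OF _ bdd_above_translate_pball_radii[OF C]] unfolding delta_c_def by force
qed

lemma translate_pball_subset_below_delta_c:
  fixes c :: "real^'m"
  assumes p: "1 \<le> p" and c: "c \<in> interior C" and C: "C \<noteq> UNIV"
    and d: "d < delta_c p C c"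
  shows "{c} + pball p d \<subseteq> C"
proof -
  let ?D = "{d. d > 0 \<and> {c} + pball p d \<subseteq> C}"
  have "?D \<noteq> {}" using translate_pball_subset_interior[OF p c] by blast
  then obtain d' where d': "d' \<in> ?D" "d < d'"
    using d less_cSup_iff[OF _ bdd_above_translate_pball_radii[OF C]] unfolding delta_c_def by auto
  have "pball p d \<subseteq> pball p d'" using d'(2) by (auto simp: pball_def)
  then show ?thesis using d'(1) by (auto simp: set_plus_def)
qed

lemma pball_subset_translate_cone:
  fixes c :: "real^'m"
  assumes p: "1 \<le> p" and C: "cone C" "C \<noteq> UNIV" and c: "c \<in> interior C"
    and e: "e > 0" and e': "e' > e / delta_c p C c"
  shows "pball p e \<subseteq> {- (e' *\<^sub>R c)} + C"
proof
  fix b :: "real^'m" assume b: "b \<in> pball p e"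
  have \<delta>: "delta_c p C c > 0" by (rule delta_c_pos[OF p c C(2)])
  then have e'_pos: "e' > 0" using e e' by (smt (verit) divide_pos_pos)
  have "pnorm p ((1/e') *\<^sub>R b) \<le> e / e'"
    using b e'_pos by (simp add: pnorm_scaleR[OF p] pball_def divide_right_mono)
  moreover have "e / e' < delta_c p C c"
    using e' e'_pos \<delta> by (simp add: divide_less_eq mult.commute)
  ultimately have "c + (1/e') *\<^sub>R b \<in> {c} + pball p (e / e')"
    by (intro set_plus_intro) (auto simp: pball_def)
  then have "c + (1/e') *\<^sub>R b \<in> C"
    using translate_pball_subset_below_delta_c[OF p c C(2) \<open>e / e' < _\<close>] by blast
  then have "e' *\<^sub>R (c + (1/e') *\<^sub>R b) \<in> C" using C(1) e'_pos by (simp add: cone_def)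
  then have "e' *\<^sub>R c + b \<in> C" using e'_pos by (simp add: scaleR_add_right)
  then show "b \<in> {- (e' *\<^sub>R c)} + C" using set_plus_intro[of "- (e' *\<^sub>R c)"] by force
qed

lemma fin_eps_infimizer_fst_of_pv_fin_eps_solution:
  fixes C :: "(real^'m) set"
  assumes p: "1 \<le> p" and C: "convex C" "cone C" "C \<noteq> UNIV" and c: "c \<in> interior C"
    and e: "e > 0" and S: "pv_fin_eps_solution p C X \<Gamma> e S"
    and e': "e' > e / delta_c p C c"
  shows "fin_eps_infimizer_sb C X \<Gamma> c e' (fst ` S)"
proof -
  let ?R = "rec_cone (upper_image C X \<Gamma>)"
  let ?K = "convex hull (\<Gamma> ` fst ` S)"
  have S_props: "S \<noteq> {}" "finite S" "S \<subseteq> Sa C X \<Gamma>"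
    and Y: "Ya C X \<Gamma> \<subseteq> (convex hull (snd ` S) + ?R) + pball p e"
    using S by (auto simp: pv_fin_eps_solution_def upper_image_eq_closure_Ya)
  have "convex hull (snd ` S) \<subseteq> convex hull (\<Gamma> ` fst ` S + C)"
    by (intro hull_mono Sa_snd_subset[OF S_props(3)])
  also have "\<dots> = ?K + C" by (simp add: convex_hull_set_plus convex_hull_eq[THEN iffD2, OF C(1)])
  finally have hull: "convex hull (snd ` S) \<subseteq> ?K + C" .
  have CR: "C \<subseteq> ?R"
    unfolding upper_image_def msum_eq_set_plus by (rule cone_subset_rec_cone_closure_plus[OF C(1,2)])
  have absorb: "C + ?R \<subseteq> ?R"
    using CR rec_cone_plus_subset by (meson order.trans set_plus_mono2 subset_refl)
  have "(C + ?R) + C = C + (C + ?R)" by (simp add: ac_simps)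
  also have "\<dots> \<subseteq> C + ?R" using absorb by (rule set_plus_mono2[OF subset_refl])
  finally have absorb2: "(C + ?R) + C \<subseteq> ?R" using absorb by blast
  have "Ya C X \<Gamma> \<subseteq> ((?K + C) + ?R) + ({- (e' *\<^sub>R c)} + C)"
    using Y set_plus_mono2[OF set_plus_mono2[OF hull subset_refl]
        pball_subset_translate_cone[OF p C(2,3) c e e']] by (rule order.trans)
  also have "\<dots> = (?K + ((C + ?R) + C)) + {- (e' *\<^sub>R c)}" by (simp add: ac_simps)
  also have "\<dots> \<subseteq> (?K + ?R) + {- (e' *\<^sub>R c)}"
    by (intro set_plus_mono2 absorb2 subset_refl)
  finally have "closure (Ya C X \<Gamma>) \<subseteq> (?K + ?R) + {- (e' *\<^sub>R c)}"
    by (intro closure_minimal closed_plus_singleton closed_compact_plus_closed closed_rec_cone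
        compact_convex_hull finite_imp_compact finite_imageI S_props(2) closed_upper_image)
  then have "upper_image C X \<Gamma> \<subseteq> (?K + ?R) + {- (e' *\<^sub>R c)}"
    by (simp only: upper_image_eq_closure_Ya)
  then show ?thesis using S_props Sa_fst_subset[OF S_props(3)] by (simp add: fin_eps_infimizer_sb_def)
qed

theorem mainTheorem12:
  fixes C :: "(real^'m) set" and X :: "(real^'n) set" and \<Gamma> :: "real^'n \<Rightarrow> real^'m"
    and p :: ereal and c :: "real^'m"
  assumes p: "1 \<le> p"
    and C_cone: "convex C" "cone C"
    and C_nontriv: "C \<noteq> {0}" "C \<noteq> UNIV"
    and C_pointed: "pointed C"
    and C_solid: "interior C \<noteq> {}"
    and X_convex: "convex X"
    and \<Gamma>_conv: "C_convex C X \<Gamma>"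
    and c: "c \<in> interior C" "pnorm p c = 1"
  shows
    "(\<forall>Sb. pv_solution C X \<Gamma> Sb \<longrightarrow> infimizer C X \<Gamma> (fst ` Sb))
     \<and> (pv_self_bounded C X \<Gamma> \<longrightarrow>
          cvop_self_bounded C X \<Gamma> \<and>
          (rec_cone (closure (Ya C X \<Gamma>)) = closure C \<longrightarrow> cvop_bounded C X \<Gamma>))
     \<and> (\<forall>e Sb. e > 0 \<and> pv_self_bounded C X \<Gamma> \<and> pv_fin_eps_solution p C X \<Gamma> e Sb \<longrightarrow>
          (\<forall>e'. e' > e / delta_c p C c \<longrightarrow> fin_eps_infimizer_sb C X \<Gamma> c e' (fst ` Sb)))"
  using infimizer_fst_of_pv_solution[OF C_cone X_convex \<Gamma>_conv]
    cvop_self_bounded_of_pv_self_bounded[OF C_cone c(1) X_convex \<Gamma>_conv]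
    cvop_bounded_of_pv_self_bounded[OF C_cone c(1)]
    fin_eps_infimizer_fst_of_pv_fin_eps_solution[OF p C_cone C_nontriv(2) c(1)]
  by blast

end
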